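(* Let $G$ be a connected graph with a pendant vertex $u$, and let $v$ be the unique neighbour of $u$, assumed to be a cut-vertex of $G$. If $G-\{v,u\}$ has at least two connected components, then $u$ is not a basis forced vertex of $G$.
   Context: All graphs are finite and simple. A pendant is a vertex with exactly one neighbour; a cut-vertex is a vertex $v$ such that $G-v$ is disconnected. For vertices $x,y$ of a connected graph $G$, $d(x,y)$ is the length of a shortest $x$–$y$ path. A set $R\subseteq V(G)$ is a resolving set if for all distinct $x,y\in V(G)$ there is $r\in R$ with $d(r,x)\neq d(r,y)$. The metric dimension $\dim(G)$ is the minimum cardinality of a resolving set, and a resolving set of cardinality $\dim(G)$ is a metric basis. A vertex is a basis forced vertex if it belongs to every metric basis of $G$. *)

theory Defs
  imports Main
begin

definition simple_graph :: "'a set \<Rightarrow> ('a \<Rightarrow> 'a \<Rightarrow> bool) \<Rightarrow> bool" where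
  "simple_graph V E \<longleftrightarrow> finite V \<and> (\<forall>x y. E x y \<longrightarrow> E y x) \<and> (\<forall>x. \<not> E x x)
     \<and> (\<forall>x y. E x y \<longrightarrow> x \<in> V \<and> y \<in> V)"

text \<open>Walks in the subgraph induced by V, as vertex lists.\<close>
definition is_walk :: "'a set \<Rightarrow> ('a \<Rightarrow> 'a \<Rightarrow> bool) \<Rightarrow> 'a list \<Rightarrow> bool" where
  "is_walk V E p \<longleftrightarrow> p \<noteq> [] \<and> set p \<subseteq> V \<and> (\<forall>i. Suc i < length p \<longrightarrow> E (p ! i) (p ! Suc i))"

definition reachable :: "'a set \<Rightarrow> ('a \<Rightarrow> 'a \<Rightarrow> bool) \<Rightarrow> 'a \<Rightarrow> 'a \<Rightarrow> bool" where
  "reachable V E x y \<longleftrightarrow> (\<exists>p. is_walk V E p \<and> hd p = x \<and> last p = y)"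

definition connected_graph :: "'a set \<Rightarrow> ('a \<Rightarrow> 'a \<Rightarrow> bool) \<Rightarrow> bool" where
  "connected_graph V E \<longleftrightarrow> V \<noteq> {} \<and> (\<forall>x\<in>V. \<forall>y\<in>V. reachable V E x y)"

definition components :: "'a set \<Rightarrow> ('a \<Rightarrow> 'a \<Rightarrow> bool) \<Rightarrow> 'a set set" where
  "components V E = (\<lambda>x. {y \<in> V. reachable V E x y}) ` V"

definition dist :: "'a set \<Rightarrow> ('a \<Rightarrow> 'a \<Rightarrow> bool) \<Rightarrow> 'a \<Rightarrow> 'a \<Rightarrow> nat" where
  "dist V E x y = (LEAST n. \<exists>p. is_walk V E p \<and> hd p = x \<and> last p = y \<and> length p = Suc n)"

definition neighbours :: "'a set \<Rightarrow> ('a \<Rightarrow> 'a \<Rightarrow> bool) \<Rightarrow> 'a \<Rightarrow> 'a set" where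
  "neighbours V E x = {y \<in> V. E x y}"

definition pendant :: "'a set \<Rightarrow> ('a \<Rightarrow> 'a \<Rightarrow> bool) \<Rightarrow> 'a \<Rightarrow> bool" where
  "pendant V E x \<longleftrightarrow> x \<in> V \<and> card (neighbours V E x) = 1"

definition cut_vertex :: "'a set \<Rightarrow> ('a \<Rightarrow> 'a \<Rightarrow> bool) \<Rightarrow> 'a \<Rightarrow> bool" where
  "cut_vertex V E v \<longleftrightarrow> v \<in> V \<and> \<not> connected_graph (V - {v}) E"

definition resolving_set :: "'a set \<Rightarrow> ('a \<Rightarrow> 'a \<Rightarrow> bool) \<Rightarrow> 'a set \<Rightarrow> bool" where
  "resolving_set V E R \<longleftrightarrow> R \<subseteq> V \<and>
     (\<forall>x\<in>V. \<forall>y\<in>V. x \<noteq> y \<longrightarrow> (\<exists>r\<in>R. dist V E r x \<noteq> dist V E r y))"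

definition metric_dim :: "'a set \<Rightarrow> ('a \<Rightarrow> 'a \<Rightarrow> bool) \<Rightarrow> nat" where
  "metric_dim V E = (LEAST k. \<exists>R. resolving_set V E R \<and> card R = k)"

definition metric_basis :: "'a set \<Rightarrow> ('a \<Rightarrow> 'a \<Rightarrow> bool) \<Rightarrow> 'a set \<Rightarrow> bool" where
  "metric_basis V E R \<longleftrightarrow> resolving_set V E R \<and> card R = metric_dim V E"

definition basis_forced :: "'a set \<Rightarrow> ('a \<Rightarrow> 'a \<Rightarrow> bool) \<Rightarrow> 'a \<Rightarrow> bool" where
  "basis_forced V E x \<longleftrightarrow> (\<forall>R. metric_basis V E R \<longrightarrow> x \<in> R)"

end

theory Submission
  imports Defs
begin

(* Suppose u lies in a metric basis R and put S = R - {u}.  Each component K of G - {u, v}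
   is attached to the rest only through v, so distances from K to vertices outside K pass
   through v; likewise d(u, z) = 1 + d(v, z) for z \<noteq> u.  Hence u only separates vertices at
   different distances from v, and a vertex w \<in> K adjacent to v together with some r \<in> S outside
   K does that as well.  At most one neighbour of v is indistinguishable from u by S (u sees all
   of them at distance 2); taking w to be that one, if it exists, also separates u from every
   other vertex.  As v has neighbours in two components, S cannot lie inside the component of w,
   so r exists and (R - {u}) \<union> {w} is a metric basis avoiding u. *)

lemma is_walk_iff_successively:
  "is_walk V E p \<longleftrightarrow> p \<noteq> [] \<and> set p \<subseteq> V \<and> successively E p"
  by (simp add: is_walk_def successively_conv_nth)

lemma is_walk_Nil [simp]: "\<not> is_walk V E []"
  by (simp add: is_walk_def)

lemma is_walk_singleton [simp]: "is_walk V E [x] \<longleftrightarrow> x \<in> V"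
  by (simp add: is_walk_iff_successively)

lemma is_walk_Cons_Cons [simp]:
  "is_walk V E (x # y # p) \<longleftrightarrow> x \<in> V \<and> E x y \<and> is_walk V E (y # p)"
  by (auto simp: is_walk_iff_successively)

lemma is_walk_join:
  assumes "is_walk V E p" "is_walk V E q" "last p = hd q"
  shows "is_walk V E (p @ tl q)"
  using assms
  by (cases q) (auto simp: is_walk_iff_successively successively_append_iff successively_Cons)

lemma is_walk_split:
  assumes "is_walk V E (p @ x # q)"
  shows "is_walk V E (p @ [x])" "is_walk V E (x # q)"
  using assms by (auto simp: is_walk_iff_successively successively_append_iff)

lemma is_walk_rev:
  assumes "\<And>x y. E x y \<Longrightarrow> E y x" "is_walk V E p"
  shows "is_walk V E (rev p)"
  using assms by (auto simp: is_walk_iff_successively intro: successively_mono)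

lemma reachable_refl: "x \<in> W \<Longrightarrow> reachable W E x x"
  unfolding reachable_def by (intro exI[of _ "[x]"]) simp

lemma reachable_trans:
  assumes "reachable W E x y" "reachable W E y z"
  shows "reachable W E x z"
proof -
  obtain p q where p: "is_walk W E p" "hd p = x" "last p = y"
    and q: "is_walk W E q" "hd q = y" "last q = z"
    using assms unfolding reachable_def by blast
  have "p \<noteq> []" "q \<noteq> []" using p q by (auto simp: is_walk_def)
  then have "hd (p @ tl q) = x" "last (p @ tl q) = z"
    using p q by (cases q; auto simp: last_append last_tl)+
  then show ?thesis
    using is_walk_join[OF p(1) q(1)] p q unfolding reachable_def by auto
qed

lemma reachable_sym:
  assumes "\<And>x y. E x y \<Longrightarrow> E y x" "reachable W E x y"
  shows "reachable W E y x"
proof -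
  obtain p where p: "is_walk W E p" "hd p = x" "last p = y"
    using assms(2) unfolding reachable_def by blast
  then have "p \<noteq> []" by (simp add: is_walk_def)
  then show ?thesis
    using is_walk_rev[OF assms(1) p(1)] p unfolding reachable_def
    by (intro exI[of _ "rev p"]) (simp add: hd_rev last_rev)
qed

lemma reachable_edge:
  assumes "reachable W E x y" "E y z" "z \<in> W"
  shows "reachable W E x z"
proof -
  obtain p where "is_walk W E p" "last p = y"
    using assms(1) unfolding reachable_def by blast
  then have "y \<in> W" by (auto simp: is_walk_def)
  then have "reachable W E y z"
    using assms(2,3) unfolding reachable_def by (intro exI[of _ "[y, z]"]) simp
  then show ?thesis using assms(1) reachable_trans by metis
qed

definition component_of :: "'a set \<Rightarrow> ('a \<Rightarrow> 'a \<Rightarrow> bool) \<Rightarrow> 'a \<Rightarrow> 'a set" where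
  "component_of W E x = {y \<in> W. reachable W E x y}"

lemma components_eq_image_component_of: "components W E = component_of W E ` W"
  by (simp add: components_def component_of_def)

lemma component_of_subset: "component_of W E x \<subseteq> W"
  by (auto simp: component_of_def)

lemma component_of_self: "x \<in> W \<Longrightarrow> x \<in> component_of W E x"
  by (simp add: component_of_def reachable_refl)

lemma component_of_edge:
  "y \<in> component_of W E x \<Longrightarrow> E y z \<Longrightarrow> z \<in> W \<Longrightarrow> z \<in> component_of W E x"
  by (auto simp: component_of_def intro: reachable_edge)

lemma component_of_eq:
  assumes "\<And>x y. E x y \<Longrightarrow> E y x" "y \<in> component_of W E x"
  shows "component_of W E y = component_of W E x"
  using assms reachable_sym[of E W x y] reachable_trans[of W E]
  unfolding component_of_def by blast

lemma metric_basis_exchange: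
  assumes "finite V" "metric_basis V E R" "u \<in> R" "resolving_set V E (insert w (R - {u}))"
  shows "metric_basis V E (insert w (R - {u}))"
proof -
  have "finite R" using assms(1,2) finite_subset unfolding metric_basis_def resolving_set_def by blast
  then have "card (insert w (R - {u})) \<le> Suc (card (R - {u}))"
    by (simp add: card_insert_if)
  also have "\<dots> = card R" using \<open>finite R\<close> assms(3) by (rule card_Suc_Diff1)
  finally have "card (insert w (R - {u})) \<le> metric_dim V E"
    using assms(2) unfolding metric_basis_def by simp
  moreover have "metric_dim V E \<le> card (insert w (R - {u}))"
    unfolding metric_dim_def using assms(4) by (intro Least_le) blast
  ultimately show ?thesis using assms(4) unfolding metric_basis_def by simp
qed

locale connected_simple_graph =
  fixes V :: "'a set" and E :: "'a \<Rightarrow> 'a \<Rightarrow> bool"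
  assumes simple: "simple_graph V E" and connected: "connected_graph V E"
begin

lemma edge_sym: "E x y \<Longrightarrow> E y x"
  using simple by (simp add: simple_graph_def)

lemma edge_irrefl: "\<not> E x x"
  using simple by (simp add: simple_graph_def)

lemma edge_in_V: "E x y \<Longrightarrow> x \<in> V \<and> y \<in> V"
  using simple by (simp add: simple_graph_def)

lemma finite_V: "finite V"
  using simple by (simp add: simple_graph_def)

abbreviation d :: "'a \<Rightarrow> 'a \<Rightarrow> nat" where
  "d \<equiv> dist V E"

lemma dist_le_walk:
  assumes "is_walk V E p" "hd p = x" "last p = y"
  shows "Suc (d x y) \<le> length p"
proof -
  have "d x y \<le> length p - 1"
    unfolding dist_def using assms by (intro Least_le exI[of _ p]) (cases p, auto)
  then show ?thesis using assms(1) by (cases p) (auto simp: is_walk_def)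
qed

lemma shortest_walk_exists:
  assumes "x \<in> V" "y \<in> V"
  obtains p where "is_walk V E p" "hd p = x" "last p = y" "length p = Suc (d x y)"
proof -
  obtain p where p: "is_walk V E p" "hd p = x" "last p = y"
    using connected assms unfolding connected_graph_def reachable_def by blast
  then have "\<exists>n p. is_walk V E p \<and> hd p = x \<and> last p = y \<and> length p = Suc n"
    by (intro exI[of _ "length p - 1"] exI[of _ p]) (cases p, auto)
  then have "\<exists>p. is_walk V E p \<and> hd p = x \<and> last p = y \<and> length p = Suc (d x y)"
    unfolding dist_def by (rule LeastI_ex)
  with that show ?thesis by blast
qed

lemma dist_self [simp]: "x \<in> V \<Longrightarrow> d x x = 0"
  using dist_le_walk[of "[x]" x x] by simp

lemma dist_eq_0_iff:
  assumes "x \<in> V" "y \<in> V"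
  shows "d x y = 0 \<longleftrightarrow> x = y"
proof
  assume "d x y = 0"
  moreover obtain p where "hd p = x" "last p = y" "length p = Suc (d x y)"
    using shortest_walk_exists[OF assms] by blast
  ultimately show "x = y" by (cases p) auto
qed (use assms in simp)

lemma dist_commute:
  assumes "x \<in> V" "y \<in> V"
  shows "d x y = d y x"
proof -
  have "d a b \<le> d b a" if ab: "a \<in> V" "b \<in> V" for a b
  proof -
    obtain p where p: "is_walk V E p" "hd p = b" "last p = a" "length p = Suc (d b a)"
      using shortest_walk_exists[OF ab(2,1)] by blast
    then have "p \<noteq> []" by (simp add: is_walk_def)
    then show ?thesis
      using dist_le_walk[OF is_walk_rev[OF edge_sym p(1)]] p by (simp add: hd_rev last_rev)
  qed
  then show ?thesis using assms by (simp add: order_antisym)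
qed

lemma dist_triangle:
  assumes "x \<in> V" "y \<in> V" "z \<in> V"
  shows "d x z \<le> d x y + d y z"
proof -
  obtain p where p: "is_walk V E p" "hd p = x" "last p = y" "length p = Suc (d x y)"
    using shortest_walk_exists[OF assms(1,2)] by blast
  obtain q where q: "is_walk V E q" "hd q = y" "last q = z" "length q = Suc (d y z)"
    using shortest_walk_exists[OF assms(2,3)] by blast
  have "hd (p @ tl q) = x" "last (p @ tl q) = z"
    using p q by (cases p; cases q; auto simp: last_append)+
  then show ?thesis
    using dist_le_walk[OF is_walk_join[OF p(1) q(1)]] p q by simp
qed

lemma dist_eq_1_iff:
  assumes "x \<in> V" "y \<in> V"
  shows "d x y = 1 \<longleftrightarrow> E x y"
proof
  assume "d x y = 1"
  moreover obtain p where "is_walk V E p" "hd p = x" "last p = y" "length p = Suc (d x y)"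
    using shortest_walk_exists[OF assms] by blast
  ultimately show "E x y" by (auto simp: length_Suc_conv)
next
  assume "E x y"
  then have "d x y \<le> 1" "x \<noteq> y"
    using dist_le_walk[of "[x, y]" x y] assms edge_irrefl by auto
  then show "d x y = 1" using dist_eq_0_iff[OF assms] by linarith
qed

lemma resolving_set_V: "resolving_set V E V"
  unfolding resolving_set_def
  by (metis dist_eq_0_iff dist_self order_refl)

lemma metric_basis_exists: "\<exists>R. metric_basis V E R"
  using LeastI_ex[of "\<lambda>k. \<exists>R. resolving_set V E R \<and> card R = k"] resolving_set_V
  unfolding metric_basis_def metric_dim_def by blast

definition cut_off :: "'a \<Rightarrow> 'a set \<Rightarrow> bool" where
  "cut_off v A \<longleftrightarrow> v \<in> V \<and> A \<subseteq> V - {v} \<and> (\<forall>a\<in>A. \<forall>b. E a b \<longrightarrow> b \<in> A \<or> b = v)"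

lemma walk_leaves_cut_off_through:
  assumes "cut_off v A" "is_walk V E p" "hd p \<in> A" "last p \<notin> A"
  shows "\<exists>q q'. p = q @ v # q' \<and> q \<noteq> [] \<and> set q \<subseteq> A"
  using assms(2-4)
proof (induction p)
  case (Cons a p)
  then obtain b p' where p: "p = b # p'" by (cases p) auto
  with Cons.prems have "E a b" "is_walk V E p" and a: "a \<in> A" by auto
  then have "b \<in> A \<or> b = v" using assms(1) unfolding cut_off_def by blast
  then show ?case
  proof
    assume "b \<in> A"
    then obtain q q' where "p = q @ v # q'" "q \<noteq> []" "set q \<subseteq> A"
      using Cons.IH \<open>is_walk V E p\<close> Cons.prems(3) p by auto
    then show ?thesis using a by (intro exI[of _ "a # q"] exI[of _ q']) simp
  qed (use p a in \<open>intro exI[of _ "[a]"] exI[of _ p'], simp\<close>)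
qed simp

lemma dist_through_cut_off:
  assumes "cut_off v A" "x \<in> A" "y \<in> V - A"
  shows "d x y = d x v + d v y"
proof -
  have V: "x \<in> V" "v \<in> V" using assms(1,2) unfolding cut_off_def by auto
  obtain p where p: "is_walk V E p" "hd p = x" "last p = y" "length p = Suc (d x y)"
    using shortest_walk_exists[of x y] V assms(3) by blast
  then obtain q q' where pq: "p = q @ v # q'" "q \<noteq> []"
    using walk_leaves_cut_off_through[OF assms(1) p(1)] assms(2,3) by auto
  have "Suc (d x v) \<le> length (q @ [v])"
    using dist_le_walk[OF is_walk_split(1)] p pq by simp
  moreover have "Suc (d v y) \<le> length (v # q')"
    using dist_le_walk[OF is_walk_split(2)] p pq by simp
  ultimately have "d x v + d v y \<le> d x y" using p(4) pq by simp
  then show ?thesis using dist_triangle[of x v y] V assms(3) by simp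
qed

lemma dist_from_cut_off_eq:
  assumes "cut_off v A" "r \<in> A" "a \<in> V - A" "b \<in> V - A" "d v a = d v b"
  shows "d r a = d r b"
  using dist_through_cut_off[OF assms(1,2)] assms(3-5) by simp

lemma cut_off_has_neighbour:
  assumes "cut_off v A" "a \<in> A"
  obtains b where "b \<in> A" "E b v"
proof -
  have "a \<in> V" "v \<in> V" "v \<notin> A" using assms unfolding cut_off_def by auto
  then obtain p where "is_walk V E p" "hd p = a" "last p = v"
    using shortest_walk_exists by metis
  then obtain q q' where "is_walk V E (q @ v # q')" "q \<noteq> []" "set q \<subseteq> A"
    using walk_leaves_cut_off_through[OF assms(1)] assms(2) \<open>v \<notin> A\<close> by metis
  then have "last q \<in> A" "E (last q) v"
    using is_walk_split(1) by (auto simp: is_walk_iff_successively successively_append_iff)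
  then show ?thesis using that by blast
qed

text \<open>Whichever side of v the vertex x lies on, one of r, w sees it through v,
  so equal distances from r and w force d v x \<le> d v y; the rest is symmetry.\<close>
lemma cut_off_pair_resolves:
  assumes C: "cut_off v C" and "w \<in> C" "r \<in> V - C" "x \<in> V" "y \<in> V" "d v x \<noteq> d v y"
  shows "d r x \<noteq> d r y \<or> d w x \<noteq> d w y"
proof -
  have V: "v \<in> V" "w \<in> V" "r \<in> V" using assms unfolding cut_off_def by auto
  have le: "d v x \<le> d v y"
    if xy: "x \<in> V" "y \<in> V" "d r x = d r y" "d w x = d w y" for x y
  proof (cases "x \<in> C")
    case True
    have "d x r = d x v + d v r"
      using dist_through_cut_off[OF C True] assms(3) by blast
    then have "d r x = d r v + d v x"
      using dist_commute[of r x] dist_commute[of x v] dist_commute[of v r] V xy(1) by simp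
    then show ?thesis using dist_triangle[of r v y] V xy by linarith
  next
    case False
    have "d w x = d w v + d v x"
      using dist_through_cut_off[OF C \<open>w \<in> C\<close>, of x] False xy(1) by blast
    then show ?thesis using dist_triangle[of w v y] V xy by linarith
  qed
  show ?thesis using le[of x y] le[of y x] assms(4-6) by linarith
qed

lemma pendant_neighbour:
  assumes "neighbours V E u = {v}"
  shows "E u v" "E u b \<Longrightarrow> b = v"
proof -
  have N: "{y \<in> V. E u y} = {v}" using assms unfolding neighbours_def .
  then show "E u v" by blast
  show "b = v" if "E u b" using N edge_in_V[OF that] that by blast
qed

lemma pendant_cut_off:
  assumes "neighbours V E u = {v}"
  shows "cut_off v {u}"
proof -
  have "u \<in> V" "v \<in> V" "u \<noteq> v"
    using edge_in_V edge_irrefl pendant_neighbour(1)[OF assms] by metis+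
  then show ?thesis using pendant_neighbour(2)[OF assms] unfolding cut_off_def by blast
qed

lemma dist_from_pendant:
  assumes "neighbours V E u = {v}" "z \<in> V" "z \<noteq> u"
  shows "d u z = Suc (d v z)"
proof -
  have "d u v = 1"
    using pendant_neighbour(1)[OF assms(1)] dist_eq_1_iff edge_in_V by blast
  then show ?thesis using dist_through_cut_off[OF pendant_cut_off[OF assms(1)]] assms(2,3) by simp
qed

lemma component_cut_off:
  assumes "neighbours V E u = {v}"
  shows "cut_off v (component_of (V - {v, u}) E x)"
  unfolding cut_off_def
proof (intro conjI ballI allI impI)
  let ?W = "V - {v, u}"
  show "v \<in> V" using edge_in_V[OF pendant_neighbour(1)[OF assms]] by blast
  show "component_of ?W E x \<subseteq> V - {v}" using component_of_subset[of ?W E x] by blast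
  fix a b assume a: "a \<in> component_of ?W E x" and ab: "E a b"
  have "a \<in> ?W" using a component_of_subset[of ?W E x] by blast
  moreover have "E u a" if "b = u" using edge_sym[OF ab] that by simp
  ultimately have "b \<noteq> u" using pendant_neighbour(2)[OF assms, of a] by blast
  moreover have "b \<in> V" using edge_in_V[OF ab] by blast
  ultimately show "b \<in> component_of ?W E x \<or> b = v"
    using component_of_edge[OF a ab] by blast
qed

lemma neighbours_in_two_components:
  assumes pend: "neighbours V E u = {v}" and two: "2 \<le> card (components (V - {v, u}) E)"
  obtains a1 a2 where "a1 \<in> V - {v, u}" "a2 \<in> V - {v, u}" "E v a1" "E v a2"
    "component_of (V - {v, u}) E a1 \<noteq> component_of (V - {v, u}) E a2"
proof -
  let ?W = "V - {v, u}"
  let ?K = "component_of ?W E"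
  have "finite (?K ` ?W)" using finite_V by simp
  moreover have "\<not> card (?K ` ?W) \<le> Suc 0"
    using two unfolding components_eq_image_component_of by linarith
  ultimately have "\<not> (\<forall>c1 \<in> ?K ` ?W. \<forall>c2 \<in> ?K ` ?W. c1 = c2)"
    using card_le_Suc0_iff_eq by metis
  then obtain x1 x2 where x: "x1 \<in> ?W" "x2 \<in> ?W" "?K x1 \<noteq> ?K x2"
    by blast
  have neighbour: "\<exists>a \<in> ?W. E v a \<and> ?K a = ?K x" if xW: "x \<in> ?W" for x
  proof -
    obtain a where a: "a \<in> ?K x" "E a v"
      using cut_off_has_neighbour[OF component_cut_off[OF pend] component_of_self[OF xW]] .
    moreover have "a \<in> ?W" using a component_of_subset[of ?W E x] by blast
    ultimately show ?thesis using edge_sym[OF a(2)] component_of_eq[OF edge_sym a(1)] by blast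
  qed
  obtain a1 a2 where "a1 \<in> ?W" "E v a1" "?K a1 = ?K x1" "a2 \<in> ?W" "E v a2" "?K a2 = ?K x2"
    using neighbour[OF x(1)] neighbour[OF x(2)] by blast
  then show ?thesis using that x(3) by simp
qed

lemma pendant_twin_unique:
  assumes pend: "neighbours V E u = {v}" and res: "resolving_set V E (insert u S)"
    and z: "z \<in> V" "z \<noteq> u" "E v z" "\<forall>r\<in>S. d r z = d r u"
    and z': "z' \<in> V" "z' \<noteq> u" "E v z'" "\<forall>r\<in>S. d r z' = d r u"
  shows "z = z'"
proof (rule ccontr)
  assume "z \<noteq> z'"
  then obtain r where "r \<in> insert u S" "d r z \<noteq> d r z'"
    using res z(1) z'(1) unfolding resolving_set_def by blast
  moreover have vV: "v \<in> V" using edge_in_V[OF z(3)] by blast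
  then have "d u z = d u z'"
    using dist_from_pendant[OF pend] dist_eq_1_iff[OF vV z(1)] dist_eq_1_iff[OF vV z'(1)] z z'
    by simp
  ultimately show False using z(4) z'(4) by auto
qed

lemma swap_separates_pendant:
  assumes pend: "neighbours V E u = {v}"
    and C: "cut_off v C" and "u \<notin> C" and wC: "w \<in> C" and "E v w"
    and r0: "r0 \<in> S" "r0 \<in> V - C" "r0 \<noteq> u"
    and twin: "\<And>z. z \<in> V \<Longrightarrow> z \<noteq> u \<Longrightarrow> E v z \<Longrightarrow> \<forall>r\<in>S. d r z = d r u \<Longrightarrow> z = w"
    and z: "z \<in> V" "z \<noteq> u" and w_eq: "d w z = d w u" and S_eq: "\<forall>r\<in>S. d r z = d r u"
  shows False
proof -
  have uV: "u \<in> V" and vV: "v \<in> V" and wV: "w \<in> V"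
    using pendant_cut_off[OF pend] C wC unfolding cut_off_def by auto
  have dvw: "d v w = 1" "d w v = 1"
    using \<open>E v w\<close> edge_sym dist_eq_1_iff vV wV by auto
  have "d w u = d w v + d v u"
    using dist_through_cut_off[OF C wC] uV \<open>u \<notin> C\<close> by blast
  moreover have "d v u = 1"
    using pendant_neighbour(1)[OF pend] edge_sym dist_eq_1_iff[OF vV uV] by blast
  ultimately have dwu: "d w u = 2" using dvw by simp
  have "d v z = 1"
  proof (cases "z \<in> C")
    case True
    have "d z r0 = d z v + d v r0"
      using dist_through_cut_off[OF C True] r0 by blast
    then have "d r0 z = d r0 v + d v z"
      using dist_commute[of r0 z] dist_commute[of z v] dist_commute[of v r0] vV z r0(2) by simp
    moreover have "d r0 u = Suc (d r0 v)"
      using dist_from_pendant[OF pend _ r0(3)] dist_commute[of r0 u] dist_commute[of v r0]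
        r0(2) uV vV by simp
    moreover have "d r0 z = d r0 u" using S_eq r0(1) by blast
    ultimately show ?thesis by simp
  next
    case False
    then have "d w z = d w v + d v z" using dist_through_cut_off[OF C wC] z by blast
    then show ?thesis using w_eq dwu dvw by simp
  qed
  then have "z = w" using twin z S_eq dist_eq_1_iff[OF vV z(1)] by blast
  then show False using w_eq dwu wV by simp
qed

lemma resolving_after_pendant_swap:
  assumes pend: "neighbours V E u = {v}"
    and res: "resolving_set V E (insert u S)" and "u \<notin> S"
    and C: "cut_off v C" and "u \<notin> C" and wC: "w \<in> C" and "E v w" and "r0 \<in> S" "r0 \<notin> C"
    and twin: "\<And>z. z \<in> V \<Longrightarrow> z \<noteq> u \<Longrightarrow> E v z \<Longrightarrow> \<forall>r\<in>S. d r z = d r u \<Longrightarrow> z = w"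
  shows "resolving_set V E (insert w S)"
proof -
  have SV: "S \<subseteq> V" using res unfolding resolving_set_def by auto
  have wV: "w \<in> V" using \<open>E v w\<close> edge_in_V by auto
  have r0: "r0 \<in> V - C" "r0 \<noteq> u" using \<open>r0 \<in> S\<close> \<open>r0 \<notin> C\<close> \<open>u \<notin> S\<close> SV by auto
  have u_resolved: False
    if "z \<in> V" "z \<noteq> u" "d w z = d w u" "\<forall>r\<in>S. d r z = d r u" for z
    using swap_separates_pendant[OF pend C \<open>u \<notin> C\<close> wC \<open>E v w\<close> \<open>r0 \<in> S\<close> r0 _ that] twin
    by blast
  show ?thesis
    unfolding resolving_set_def
  proof (intro conjI ballI impI)
    show "insert w S \<subseteq> V" using SV wV by blast
    fix x y assume xy: "x \<in> V" "y \<in> V" "x \<noteq> y"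
    show "\<exists>r\<in>insert w S. d r x \<noteq> d r y"
    proof (rule ccontr)
      assume "\<not> ?thesis"
      then have w_eq: "d w x = d w y" and S_eq: "\<forall>r\<in>S. d r x = d r y" by auto
      then have "d u x \<noteq> d u y" using res xy unfolding resolving_set_def by fastforce
      consider "x = u" | "y = u" | "x \<noteq> u" "y \<noteq> u" by blast
      then show False
      proof cases
        case 1
        then have "y \<noteq> u" "d w y = d w u" "\<forall>r\<in>S. d r y = d r u"
          using xy(3) w_eq S_eq by auto
        then show False using u_resolved xy(2) by blast
      next
        case 2
        then have "x \<noteq> u" "d w x = d w u" "\<forall>r\<in>S. d r x = d r u"
          using xy(3) w_eq S_eq by auto
        then show False using u_resolved xy(1) by blast
      next
        case 3
        then have "d v x \<noteq> d v y"
          using \<open>d u x \<noteq> d u y\<close> dist_from_pendant[OF pend] xy by simp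
        then show False
          using cut_off_pair_resolves[OF C wC, of r0 x y] r0 \<open>r0 \<notin> C\<close> \<open>r0 \<in> S\<close> xy w_eq S_eq
          by blast
      qed
    qed
  qed
qed

text \<open>Otherwise a neighbour of v in a component other than that of w would be a second twin.\<close>
lemma rest_not_within_twin_component:
  assumes pend: "neighbours V E u = {v}"
    and a: "a1 \<in> V - {v, u}" "a2 \<in> V - {v, u}" "E v a1" "E v a2"
      "component_of (V - {v, u}) E a1 \<noteq> component_of (V - {v, u}) E a2"
    and "w \<in> V - {v, u}"
    and twin: "\<And>z. z \<in> V \<Longrightarrow> z \<noteq> u \<Longrightarrow> E v z \<Longrightarrow> \<forall>r\<in>S. d r z = d r u \<Longrightarrow> z = w"
  shows "\<not> S \<subseteq> component_of (V - {v, u}) E w"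
proof
  let ?W = "V - {v, u}"
  let ?K = "component_of ?W E"
  assume S: "S \<subseteq> ?K w"
  have uV: "u \<in> V" and vV: "v \<in> V"
    using pendant_cut_off[OF pend] unfolding cut_off_def by auto
  have "\<not> (a1 \<in> ?K w \<and> a2 \<in> ?K w)"
    using component_of_eq[of E, OF edge_sym] a(5) by metis
  then obtain a where a': "a \<in> ?W" "E v a" "a \<notin> ?K w"
    using a by blast
  have "a \<in> V" using a'(1) by blast
  then have "d v a = d v u"
    using dist_eq_1_iff[OF vV \<open>a \<in> V\<close>] dist_eq_1_iff[OF vV uV] a'(2)
      edge_sym[OF pendant_neighbour(1)[OF pend]] by simp
  moreover have "u \<notin> ?K w" using component_of_subset[of ?W E w] by blast
  ultimately have "\<forall>r\<in>S. d r a = d r u"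
    using dist_from_cut_off_eq[OF component_cut_off[OF pend]] S a' uV by blast
  then have "a = w" using twin \<open>a \<in> V\<close> a'(1,2) by blast
  then show False using component_of_self[OF \<open>w \<in> ?W\<close>] a'(3) by blast
qed

lemma pendant_swap_exists:
  assumes pend: "neighbours V E u = {v}" and two: "2 \<le> card (components (V - {v, u}) E)"
    and res: "resolving_set V E R" and "u \<in> R"
  obtains w where "w \<noteq> u" "resolving_set V E (insert w (R - {u}))"
proof -
  let ?W = "V - {v, u}"
  let ?K = "component_of ?W E"
  obtain a1 a2 where a: "a1 \<in> ?W" "a2 \<in> ?W" "E v a1" "E v a2" "?K a1 \<noteq> ?K a2"
    using neighbours_in_two_components[OF pend two] .
  define S where "S = R - {u}"
  have R: "insert u S = R" "u \<notin> S" using \<open>u \<in> R\<close> unfolding S_def by auto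
  define B where "B = {z \<in> V. z \<noteq> u \<and> E v z \<and> (\<forall>r\<in>S. d r z = d r u)}"
  obtain w where w: "w \<in> ?W" "E v w" "B \<subseteq> {w}"
  proof (cases "B = {}")
    case False
    then obtain y where y: "y \<in> B" by blast
    then have "y \<noteq> v" using edge_irrefl unfolding B_def by auto
    moreover have "B \<subseteq> {y}"
      using pendant_twin_unique[OF pend res[folded R(1)]] y unfolding B_def by blast
    ultimately show ?thesis using that[of y] y unfolding B_def by blast
  qed (use that a(1,3) in blast)
  then have twin: "z = w" if "z \<in> V" "z \<noteq> u" "E v z" "\<forall>r\<in>S. d r z = d r u" for z
    using that unfolding B_def by blast
  have "\<not> S \<subseteq> ?K w"
    using rest_not_within_twin_component[OF pend a w(1)] twin by blast
  then obtain r0 where "r0 \<in> S" "r0 \<notin> ?K w" by blast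
  moreover have "u \<notin> ?K w" using component_of_subset[of ?W E w] by blast
  ultimately have "resolving_set V E (insert w S)"
    using resolving_after_pendant_swap[OF pend res[folded R(1)] R(2) component_cut_off[OF pend]]
      component_of_self[OF w(1)] w(2) twin
    by blast
  then show ?thesis using that w(1) unfolding S_def by blast
qed

end

theorem theorem3:
  fixes V :: "'a set" and E :: "'a \<Rightarrow> 'a \<Rightarrow> bool" and u v :: 'a
  assumes "simple_graph V E"
    and "connected_graph V E"
    and "pendant V E u"
    and "neighbours V E u = {v}"
    and "cut_vertex V E v"
    and "2 \<le> card (components (V - {v, u}) E)"
  shows "\<not> basis_forced V E u"
proof -
  interpret connected_simple_graph V E using assms(1,2) by unfold_locales
  obtain R where R: "metric_basis V E R" using metric_basis_exists by blast
  show ?thesis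
  proof (cases "u \<in> R")
    case True
    then obtain w where "w \<noteq> u" "resolving_set V E (insert w (R - {u}))"
      using pendant_swap_exists[OF assms(4,6)] R unfolding metric_basis_def by blast
    then show ?thesis
      using metric_basis_exchange[OF finite_V R True] unfolding basis_forced_def by blast
  qed (use R in \<open>auto simp: basis_forced_def\<close>)
qed

end
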